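(* Let $\boldsymbol{\phi}\in\mathcal{D}_{\boldsymbol{\phi}}(\boldsymbol{r})$ be such that $t_i(a,k)>0$ for all $i\in\mathcal{V}$ and $(a,k)\in\mathcal{S}$, and suppose $\boldsymbol{\phi}$ satisfies, for all $i\in\mathcal{V}$, $j\in\{0\}\cup\mathcal{V}$, $(a,k)\in\mathcal{S}$, $$\frac{\partial T}{\partial \phi_{ij}(a,k)} \begin{cases} = \min_{j'\in\{0\}\cup\mathcal{V}} \frac{\partial T}{\partial \phi_{ij'}(a,k)}, & \text{if } \phi_{ij}(a,k)>0,\\ \geq \min_{j'\in\{0\}\cup\mathcal{V}} \frac{\partial T}{\partial \phi_{ij'}(a,k)}, & \text{if } \phi_{ij}(a,k)=0.\end{cases}$$ Then $\boldsymbol{\phi}$ is a global optimal solution of $\min_{\boldsymbol{\phi}\in\mathcal{D}_{\boldsymbol{\phi}}(\boldsymbol{r})}T(\boldsymbol{\phi})$.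
   Context: Service-chain computing network model. $\mathcal{G}=(\mathcal{V},\mathcal{E})$ is a directed, strongly connected graph whose links are bidirectional ($(i,j)\in\mathcal{E}\Rightarrow(j,i)\in\mathcal{E}$). $\mathcal{A}$ is a finite set of applications; application $a$ has a destination $d_a\in\mathcal{V}$ and a chain of $|\mathcal{T}_a|$ tasks performed in order. The set of stages is $\mathcal{S}=\{(a,k): a\in\mathcal{A}, k=0,1,\dots,|\mathcal{T}_a|\}$; stage $(a,k)$ denotes packets that have completed the first $k$ tasks of $a$, and has packet size $L_{(a,k)}>0$. Exogenous input rates are $r_i(a)\ge 0$ (stage $(a,0)$ packets injected at node $i$), $\boldsymbol{r}=[r_i(a)]$. The forwarding strategy $\boldsymbol{\phi}=[\phi_{ij}(a,k)]_{(a,k)\in\mathcal{S},i\in\mathcal{V},j\in\{0\}\cup\mathcal{V}}$ has $\phi_{ij}(a,k)\in[0,1]$; for $j\in\mathcal{V}$ it is the fraction of node $i$'s stage-$(a,k)$ traffic sent to node $j$ (with $\phi_{ij}(a,k)=0$ if $(i,j)\notin\mathcal{E}$), and $\phi_{i0}(a,k)$ is the fraction sent to $i$'s local processor, which converts each stage-$(a,k)$ packet into one stage-$(a,k+1)$ packet; $\phi_{i0}(a,|\mathcal{T}_a|)=0$. Flow conservation: $\sum_{j\in\{0\}\cup\mathcal{V}}\phi_{ij}(a,k)=0$ if $k=|\mathcal{T}_a|$ and $i=d_a$, and $=1$ otherwise. Traffic $t_i(a,k)$ satisfies $t_i(a,0)=\sum_{j\in\mathcal{V}}t_j(a,0)\phi_{ji}(a,0)+r_i(a)$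 and, for $k\ge1$, $t_i(a,k)=\sum_{j\in\mathcal{V}}t_j(a,k)\phi_{ji}(a,k)+t_i(a,k-1)\phi_{i0}(a,k-1)$. Link flows $f_{ij}(a,k)=t_i(a,k)\phi_{ij}(a,k)$, processor inputs $g_i(a,k)=t_i(a,k)\phi_{i0}(a,k)$, total link flow $F_{ij}=\sum_{(a,k)\in\mathcal{S}}L_{(a,k)}f_{ij}(a,k)$, computation workload $G_i=\sum_{(a,k)\in\mathcal{S}}w_i(a,k)g_i(a,k)$ with weights $w_i(a,k)>0$. Link costs $D_{ij}(\cdot)$ and computation costs $C_i(\cdot)$ are increasing, continuously differentiable, convex functions (possibly taking value $+\infty$ outside a domain). Total cost $T(\boldsymbol{\phi})=\sum_{(i,j)\in\mathcal{E}}D_{ij}(F_{ij})+\sum_{i\in\mathcal{V}}C_i(G_i)$. The feasible set $\mathcal{D}_{\boldsymbol{\phi}}(\boldsymbol{r})$ consists of $\boldsymbol{\phi}$ satisfying flow conservation with all $D_{ij}(F_{ij})<\infty$ and $C_i(G_i)<\infty$. Marginal quantities: $\partial T/\partial t_i(a,k)$ is the marginal total cost of an additional exogenous injection of stage-$(a,k)$ traffic at node $i$ (with $\boldsymbol{\phi}$ fixed); it satisfies $\partial T/\partial t_{d_a}(a,|\mathcal{T}_a|)=0$, for $k=|\mathcal{T}_a|$: $\frac{\partial T}{\partial t_i(a,k)}=\sum_{j\in\mathcal{V}}\phi_{ij}(a,k)\big(L_{(a,k)}D'_{ij}(F_{ij})+\frac{\partial T}{\partial t_j(a,k)}\big)$,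 and for $k<|\mathcal{T}_a|$: $\frac{\partial T}{\partial t_i(a,k)}=\phi_{i0}(a,k)\big(w_i(a,k)C'_i(G_i)+\frac{\partial T}{\partial t_i(a,k+1)}\big)+\sum_{j\in\mathcal{V}}\phi_{ij}(a,k)\big(L_{(a,k)}D'_{ij}(F_{ij})+\frac{\partial T}{\partial t_j(a,k)}\big)$. The partial derivatives of $T$ are $\frac{\partial T}{\partial\phi_{ij}(a,k)}=t_i(a,k)\big(L_{(a,k)}D'_{ij}(F_{ij})+\frac{\partial T}{\partial t_j(a,k)}\big)$ for $(i,j)\in\mathcal{E}$, $\frac{\partial T}{\partial\phi_{i0}(a,k)}=t_i(a,k)\big(w_i(a,k)C'_i(G_i)+\frac{\partial T}{\partial t_i(a,k+1)}\big)$ for $k<|\mathcal{T}_a|$, and by convention $\partial T/\partial\phi_{ij}(a,k)=\infty$ for $(i,j)\notin\mathcal{E}$ and $\partial T/\partial\phi_{i0}(a,|\mathcal{T}_a|)=\infty$. *)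

theory Defs
  imports "HOL-Analysis.Analysis"
begin

text \<open>
  Nodes: elements of a finite type 'v (the node set V is UNIV).
  Applications: elements of a finite type 'a (the application set A is UNIV).
  nT a = |T_a| (number of tasks), dest a = d_a.
  Stages (a,k) with k \<le> nT a.
  Forwarding strategy: phi a k i j with j :: 'v option;
  j = None is the local processor "0", j = Some j' is node j'.
  Traffic t a k i = t_i(a,k); exogenous rates r i a = r_i(a).
  Link costs: D i j (real-valued on the domain Ddom i j, +\<infinity> outside),
  with derivative D' i j; similarly C i, Cdom i, C' i.
\<close>

text \<open>Monotonicity of the extended-valued
  function forces S to be downward closed.\<close>
definition cost_fun :: "real set \<Rightarrow> (real \<Rightarrow> real) \<Rightarrow> (real \<Rightarrow> real) \<Rightarrow> bool" where
  "cost_fun S f f' \<longleftrightarrow>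
     (\<forall>x\<in>S. \<forall>y. y \<le> x \<longrightarrow> y \<in> S) \<and>
     convex_on S f \<and> mono_on S f \<and>
     (\<forall>x\<in>S. (f has_real_derivative f' x) (at x within S)) \<and>
     continuous_on S f'"

definition valid_phi ::
  "('v \<times> 'v) set \<Rightarrow> ('a \<Rightarrow> nat) \<Rightarrow> ('a \<Rightarrow> 'v) \<Rightarrow>
   ('a \<Rightarrow> nat \<Rightarrow> 'v \<Rightarrow> 'v option \<Rightarrow> real) \<Rightarrow> bool" where
  "valid_phi E nT dest phi \<longleftrightarrow>
     (\<forall>a k i j. k \<le> nT a \<longrightarrow> 0 \<le> phi a k i j \<and> phi a k i j \<le> 1) \<and>
     (\<forall>a k i j. k \<le> nT a \<longrightarrow> (i, j) \<notin> E \<longrightarrow> phi a k i (Some j) = 0) \<and>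
     (\<forall>a i. phi a (nT a) i None = 0) \<and>
     (\<forall>a k i. k \<le> nT a \<longrightarrow>
        (\<Sum>j\<in>UNIV. phi a k i j) = (if k = nT a \<and> i = dest a then 0 else 1))"

definition is_traffic ::
  "('a \<Rightarrow> nat) \<Rightarrow> ('v::finite \<Rightarrow> 'a \<Rightarrow> real) \<Rightarrow>
   ('a \<Rightarrow> nat \<Rightarrow> 'v \<Rightarrow> 'v option \<Rightarrow> real) \<Rightarrow> ('a \<Rightarrow> nat \<Rightarrow> 'v \<Rightarrow> real) \<Rightarrow> bool" where
  "is_traffic nT r phi t \<longleftrightarrow>
     (\<forall>a k i. k \<le> nT a \<longrightarrow>
        t a k i = (\<Sum>j\<in>UNIV. t a k j * phi a k j (Some i)) +
                  (if k = 0 then r i a else t a (k - 1) i * phi a (k - 1) i None))"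

definition traffic_unique ::
  "('a \<Rightarrow> nat) \<Rightarrow> ('v::finite \<Rightarrow> 'a \<Rightarrow> real) \<Rightarrow>
   ('a \<Rightarrow> nat \<Rightarrow> 'v \<Rightarrow> 'v option \<Rightarrow> real) \<Rightarrow> bool" where
  "traffic_unique nT r phi \<longleftrightarrow>
     (\<exists>t. is_traffic nT r phi t) \<and>
     (\<forall>t t'. is_traffic nT r phi t \<and> is_traffic nT r phi t' \<longrightarrow>
        (\<forall>a k i. k \<le> nT a \<longrightarrow> t a k i = t' a k i))"

definition traffic ::
  "('a \<Rightarrow> nat) \<Rightarrow> ('v::finite \<Rightarrow> 'a \<Rightarrow> real) \<Rightarrow>
   ('a \<Rightarrow> nat \<Rightarrow> 'v \<Rightarrow> 'v option \<Rightarrow> real) \<Rightarrow> ('a \<Rightarrow> nat \<Rightarrow> 'v \<Rightarrow> real)" where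
  "traffic nT r phi = (SOME t. is_traffic nT r phi t)"

definition linkflow ::
  "('a::finite \<Rightarrow> nat) \<Rightarrow> ('a \<Rightarrow> nat \<Rightarrow> real) \<Rightarrow>
   ('a \<Rightarrow> nat \<Rightarrow> 'v \<Rightarrow> 'v option \<Rightarrow> real) \<Rightarrow> ('a \<Rightarrow> nat \<Rightarrow> 'v \<Rightarrow> real) \<Rightarrow>
   'v \<Rightarrow> 'v \<Rightarrow> real" where
  "linkflow nT L phi t i j =
     (\<Sum>a\<in>UNIV. \<Sum>k\<le>nT a. L a k * (t a k i * phi a k i (Some j)))"

definition workload ::
  "('a::finite \<Rightarrow> nat) \<Rightarrow> ('v \<Rightarrow> 'a \<Rightarrow> nat \<Rightarrow> real) \<Rightarrow>
   ('a \<Rightarrow> nat \<Rightarrow> 'v \<Rightarrow> 'v option \<Rightarrow> real) \<Rightarrow> ('a \<Rightarrow> nat \<Rightarrow> 'v \<Rightarrow> real) \<Rightarrow>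
   'v \<Rightarrow> real" where
  "workload nT w phi t i =
     (\<Sum>a\<in>UNIV. \<Sum>k\<le>nT a. w i a k * (t a k i * phi a k i None))"

definition feasible ::
  "('v::finite \<times> 'v) set \<Rightarrow> ('a::finite \<Rightarrow> nat) \<Rightarrow> ('a \<Rightarrow> 'v) \<Rightarrow>
   ('a \<Rightarrow> nat \<Rightarrow> real) \<Rightarrow> ('v \<Rightarrow> 'a \<Rightarrow> nat \<Rightarrow> real) \<Rightarrow>
   ('v \<Rightarrow> 'v \<Rightarrow> real set) \<Rightarrow> ('v \<Rightarrow> real set) \<Rightarrow> ('v \<Rightarrow> 'a \<Rightarrow> real) \<Rightarrow>
   ('a \<Rightarrow> nat \<Rightarrow> 'v \<Rightarrow> 'v option \<Rightarrow> real) \<Rightarrow> bool" where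
  "feasible E nT dest L w Ddom Cdom r phi \<longleftrightarrow>
     valid_phi E nT dest phi \<and> traffic_unique nT r phi \<and>
     (\<forall>(i, j)\<in>E. linkflow nT L phi (traffic nT r phi) i j \<in> Ddom i j) \<and>
     (\<forall>i. workload nT w phi (traffic nT r phi) i \<in> Cdom i)"

definition total_cost ::
  "('v::finite \<times> 'v) set \<Rightarrow> ('a::finite \<Rightarrow> nat) \<Rightarrow>
   ('a \<Rightarrow> nat \<Rightarrow> real) \<Rightarrow> ('v \<Rightarrow> 'a \<Rightarrow> nat \<Rightarrow> real) \<Rightarrow>
   ('v \<Rightarrow> 'v \<Rightarrow> real \<Rightarrow> real) \<Rightarrow> ('v \<Rightarrow> real \<Rightarrow> real) \<Rightarrow> ('v \<Rightarrow> 'a \<Rightarrow> real) \<Rightarrow>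
   ('a \<Rightarrow> nat \<Rightarrow> 'v \<Rightarrow> 'v option \<Rightarrow> real) \<Rightarrow> real" where
  "total_cost E nT L w D C r phi =
     (\<Sum>(i, j)\<in>E. D i j (linkflow nT L phi (traffic nT r phi) i j)) +
     (\<Sum>i\<in>UNIV. C i (workload nT w phi (traffic nT r phi) i))"

text \<open>delta a k i stands for dT/dt_i(a,k): the marginal-cost recursion.\<close>
definition is_marginal ::
  "('a::finite \<Rightarrow> nat) \<Rightarrow> ('a \<Rightarrow> 'v::finite) \<Rightarrow>
   ('a \<Rightarrow> nat \<Rightarrow> real) \<Rightarrow> ('v \<Rightarrow> 'a \<Rightarrow> nat \<Rightarrow> real) \<Rightarrow>
   ('v \<Rightarrow> 'v \<Rightarrow> real \<Rightarrow> real) \<Rightarrow> ('v \<Rightarrow> real \<Rightarrow> real) \<Rightarrow>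
   ('a \<Rightarrow> nat \<Rightarrow> 'v \<Rightarrow> 'v option \<Rightarrow> real) \<Rightarrow> ('a \<Rightarrow> nat \<Rightarrow> 'v \<Rightarrow> real) \<Rightarrow>
   ('a \<Rightarrow> nat \<Rightarrow> 'v \<Rightarrow> real) \<Rightarrow> bool" where
  "is_marginal nT dest L w D' C' phi t delta \<longleftrightarrow>
     (\<forall>a. delta a (nT a) (dest a) = 0) \<and>
     (\<forall>a i. i \<noteq> dest a \<longrightarrow>
        delta a (nT a) i =
          (\<Sum>j\<in>UNIV. phi a (nT a) i (Some j) *
             (L a (nT a) * D' i j (linkflow nT L phi t i j) + delta a (nT a) j))) \<and>
     (\<forall>a k i. k < nT a \<longrightarrow>
        delta a k i =
          phi a k i None * (w i a k * C' i (workload nT w phi t i) + delta a (k + 1) i) +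
          (\<Sum>j\<in>UNIV. phi a k i (Some j) *
             (L a k * D' i j (linkflow nT L phi t i j) + delta a k j)))"

definition dT_dphi ::
  "('v::finite \<times> 'v) set \<Rightarrow> ('a::finite \<Rightarrow> nat) \<Rightarrow>
   ('a \<Rightarrow> nat \<Rightarrow> real) \<Rightarrow> ('v \<Rightarrow> 'a \<Rightarrow> nat \<Rightarrow> real) \<Rightarrow>
   ('v \<Rightarrow> 'v \<Rightarrow> real \<Rightarrow> real) \<Rightarrow> ('v \<Rightarrow> real \<Rightarrow> real) \<Rightarrow>
   ('a \<Rightarrow> nat \<Rightarrow> 'v \<Rightarrow> 'v option \<Rightarrow> real) \<Rightarrow> ('a \<Rightarrow> nat \<Rightarrow> 'v \<Rightarrow> real) \<Rightarrow>
   ('a \<Rightarrow> nat \<Rightarrow> 'v \<Rightarrow> real) \<Rightarrow> 'a \<Rightarrow> nat \<Rightarrow> 'v \<Rightarrow> 'v option \<Rightarrow> ereal" where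
  "dT_dphi E nT L w D' C' phi t delta a k i j =
     (case j of
        None \<Rightarrow>
          (if k < nT a
           then ereal (t a k i * (w i a k * C' i (workload nT w phi t i) + delta a (k + 1) i))
           else \<infinity>)
      | Some j' \<Rightarrow>
          (if (i, j') \<in> E
           then ereal (t a k i * (L a k * D' i j' (linkflow nT L phi t i j') + delta a k j'))
           else \<infinity>))"

end

theory Submission
  imports Defs
begin

text \<open>
  By convexity, \<open>T(psi) - T(phi)\<close> is at least the difference of the costs of the flows of
  \<open>psi\<close> and of \<open>phi\<close>, both priced at the marginal link and processor costs of \<open>phi\<close>.
  Telescoping the marginal costs \<open>delta\<close> along the traffic equations, this linearised cost of a
  strategy equals the injected traffic valued at \<open>delta\<close>, plus the traffic-weighted sum of the
  strategy's reduced costs: the average excess of its one-hop costs over \<open>delta\<close>. The reduced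
  costs of \<open>phi\<close> vanish by the marginal-cost recursion. The optimality condition says that
  \<open>phi\<close> only uses hops of minimal cost, so \<open>delta\<close> is that minimum and the reduced costs of
  \<open>psi\<close> are nonnegative; so is the traffic of \<open>psi\<close>, since the traffic equations form a
  substochastic linear system with a unique solution.
\<close>

text \<open>Unlike \<open>convex_on_imp_above_tangent\<close>, this allows \<open>c\<close> to be the largest point
  of \<open>S\<close>.\<close>
lemma convex_on_above_tangent_down_closed:
  fixes f :: "real \<Rightarrow> real"
  assumes down_closed: "\<forall>x\<in>S. \<forall>y. y \<le> x \<longrightarrow> y \<in> S" and convex: "convex_on S f"
    and "c \<in> S" "x \<in> S" and deriv: "(f has_real_derivative f') (at c within S)"
  shows "f c + f' * (x - c) \<le> f x"
proof (cases x c rule: linorder_cases)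
  case greater
  have sub: "{..x} \<subseteq> S" using down_closed \<open>x \<in> S\<close> by auto
  have "f' * (x - c) \<le> f x - f c"
  proof (rule convex_on_imp_above_tangent)
    show "convex_on {..x} f" using convex_on_subset[OF convex sub] by simp
    show "(f has_real_derivative f') (at c within {..x})"
      using has_field_derivative_subset[OF deriv sub] .
  qed (use greater in auto)
  then show ?thesis by simp
next
  case less
  have "{..<c} \<subseteq> S" using down_closed \<open>c \<in> S\<close> by auto
  then have "((\<lambda>y. (f y - f c) / (y - c)) \<longlongrightarrow> f') (at_left c)"
    using has_field_derivative_subset[OF deriv] by (simp add: has_field_derivative_iff)
  moreover have "\<forall>\<^sub>F y in at_left c. (f x - f c) / (x - c) \<le> (f y - f c) / (y - c)"
    using eventually_at_left_real[OF less]
  proof eventually_elim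
    case (elim y)
    then have "y \<in> S" using down_closed \<open>c \<in> S\<close> by auto
    then show ?case
      using convex_on_slope_le(2)[OF convex \<open>x \<in> S\<close> \<open>c \<in> S\<close>, of y] elim
      by (simp add: minus_divide_right[symmetric] divide_minus_right)
  qed
  ultimately have "(f x - f c) / (x - c) \<le> f'"
    by (rule tendsto_lowerbound) simp
  then show ?thesis using less by (simp add: field_simps)
qed simp

lemma cost_fun_above_tangent:
  "cost_fun S f f' \<Longrightarrow> c \<in> S \<Longrightarrow> x \<in> S \<Longrightarrow> f c + f' c * (x - c) \<le> f x"
  unfolding cost_fun_def by (intro convex_on_above_tangent_down_closed) auto

lemma substochastic_subinvariant_eq:
  fixes P :: "'i \<Rightarrow> 'i \<Rightarrow> real"
  assumes "finite I"
    and row_le: "\<And>p. p \<in> I \<Longrightarrow> (\<Sum>q\<in>I. P p q) \<le> 1"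
    and z_nonpos: "\<And>p. p \<in> I \<Longrightarrow> z p \<le> 0"
    and subinvariant: "\<And>q. q \<in> I \<Longrightarrow> (\<Sum>p\<in>I. z p * P p q) \<le> z q"
    and "q \<in> I"
  shows "(\<Sum>p\<in>I. z p * P p q) = z q"
proof -
  have gap_nonneg: "0 \<le> z q - (\<Sum>p\<in>I. z p * P p q)" if "q \<in> I" for q
    using subinvariant[OF that] by simp
  have "z p \<le> z p * (\<Sum>q\<in>I. P p q)" if "p \<in> I" for p
    using mult_left_mono_neg[OF row_le[OF that] z_nonpos[OF that]] by simp
  then have "(\<Sum>p\<in>I. z p) \<le> (\<Sum>p\<in>I. z p * (\<Sum>q\<in>I. P p q))"
    by (rule sum_mono)
  also have "\<dots> = (\<Sum>q\<in>I. \<Sum>p\<in>I. z p * P p q)"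
    unfolding sum_distrib_left by (rule sum.swap)
  finally have "(\<Sum>q\<in>I. z q - (\<Sum>p\<in>I. z p * P p q)) \<le> 0"
    by (simp add: sum_subtractf)
  moreover have "0 \<le> (\<Sum>q\<in>I. z q - (\<Sum>p\<in>I. z p * P p q))"
    using gap_nonneg by (rule sum_nonneg)
  ultimately have "(\<Sum>q\<in>I. z q - (\<Sum>p\<in>I. z p * P p q)) = 0" by linarith
  then show ?thesis
    using sum_nonneg_eq_0_iff[OF \<open>finite I\<close> gap_nonneg] \<open>q \<in> I\<close> by simp
qed

text \<open>The negative part of the solution is a subinvariant vector, hence an invariant one,
  so subtracting it yields another solution; uniqueness makes it vanish.\<close>
lemma substochastic_fixpoint_nonneg:
  fixes P :: "'i \<Rightarrow> 'i \<Rightarrow> real"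
  assumes "finite I"
    and P_nonneg: "\<And>p q. p \<in> I \<Longrightarrow> q \<in> I \<Longrightarrow> 0 \<le> P p q"
    and row_le: "\<And>p. p \<in> I \<Longrightarrow> (\<Sum>q\<in>I. P p q) \<le> 1"
    and b_nonneg: "\<And>q. q \<in> I \<Longrightarrow> 0 \<le> b q"
    and fixpoint: "\<And>q. q \<in> I \<Longrightarrow> x q = (\<Sum>p\<in>I. x p * P p q) + b q"
    and unique: "\<And>y q. (\<And>q. q \<in> I \<Longrightarrow> y q = (\<Sum>p\<in>I. y p * P p q) + b q) \<Longrightarrow>
      q \<in> I \<Longrightarrow> y q = x q"
    and "q \<in> I"
  shows "0 \<le> x q"
proof -
  define z where "z p = min (x p) 0" for p
  have subinvariant: "(\<Sum>p\<in>I. z p * P p q) \<le> z q" if "q \<in> I" for q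
  proof -
    have "(\<Sum>p\<in>I. z p * P p q) \<le> (\<Sum>p\<in>I. x p * P p q)"
      using P_nonneg that by (intro sum_mono mult_right_mono) (auto simp: z_def)
    also have "\<dots> \<le> x q" using fixpoint[OF that] b_nonneg[OF that] by simp
    moreover have "(\<Sum>p\<in>I. z p * P p q) \<le> 0"
      using P_nonneg that by (intro sum_nonpos) (simp add: z_def mult_nonpos_nonneg)
    ultimately show ?thesis by (simp add: z_def)
  qed
  have invariant: "(\<Sum>p\<in>I. z p * P p q) = z q" if "q \<in> I" for q
    using substochastic_subinvariant_eq[OF \<open>finite I\<close> row_le _ subinvariant that]
    by (simp add: z_def)
  have "x q - z q = x q"
  proof (rule unique[OF _ \<open>q \<in> I\<close>])
    fix q assume "q \<in> I"
    then show "x q - z q = (\<Sum>p\<in>I. (x p - z p) * P p q) + b q"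
      using fixpoint invariant by (simp add: left_diff_distrib sum_subtractf)
  qed
  then show ?thesis by (simp add: z_def)
qed

lemma fixpoint_telescoping:
  fixes P :: "'i \<Rightarrow> 'i \<Rightarrow> real"
  assumes "finite I"
    and fixpoint: "\<And>q. q \<in> I \<Longrightarrow> x q = (\<Sum>p\<in>I. x p * P p q) + b q"
    and row_sum: "\<And>p. p \<in> I \<Longrightarrow> d p * (\<Sum>q\<in>I. P p q) = d p"
  shows "(\<Sum>p\<in>I. x p * (\<Sum>q\<in>I. P p q * (d q - d p))) = - (\<Sum>q\<in>I. b q * d q)"
proof -
  have "(\<Sum>p\<in>I. x p * (\<Sum>q\<in>I. P p q * (d q - d p)))
      = (\<Sum>p\<in>I. \<Sum>q\<in>I. x p * P p q * d q) - (\<Sum>p\<in>I. x p * (d p * (\<Sum>q\<in>I. P p q)))"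
    by (simp add: sum_distrib_left sum_subtractf algebra_simps)
  also have "(\<Sum>p\<in>I. \<Sum>q\<in>I. x p * P p q * d q) = (\<Sum>q\<in>I. d q * (\<Sum>p\<in>I. x p * P p q))"
    by (subst sum.swap) (simp add: sum_distrib_left algebra_simps)
  also have "(\<Sum>q\<in>I. d q * (\<Sum>p\<in>I. x p * P p q)) = (\<Sum>q\<in>I. d q * (x q - b q))"
    using fixpoint by (intro sum.cong) auto
  also have "(\<Sum>p\<in>I. x p * (d p * (\<Sum>q\<in>I. P p q))) = (\<Sum>p\<in>I. x p * d p)"
    using row_sum by (intro sum.cong) auto
  also have "(\<Sum>q\<in>I. d q * (x q - b q)) = (\<Sum>q\<in>I. x q * d q) - (\<Sum>q\<in>I. b q * d q)"
    unfolding sum_subtractf[symmetric] by (rule sum.cong) (simp_all add: algebra_simps)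
  finally show ?thesis by simp
qed

lemma convex_combination_le:
  fixes p v :: "'j \<Rightarrow> real"
  assumes "finite J" and nonneg: "\<And>j. j \<in> J \<Longrightarrow> 0 \<le> p j" and "(\<Sum>j\<in>J. p j) = 1"
    and support_le: "\<And>j. j \<in> J \<Longrightarrow> 0 < p j \<Longrightarrow> v j \<le> c"
  shows "(\<Sum>j\<in>J. p j * v j) \<le> c"
proof -
  have "p j * v j \<le> p j * c" if "j \<in> J" for j
  proof (cases "p j = 0")
    case False
    then show ?thesis
      using nonneg[OF that] support_le[OF that] by (simp add: mult_left_mono)
  qed simp
  then have "(\<Sum>j\<in>J. p j * v j) \<le> (\<Sum>j\<in>J. p j * c)"
    by (rule sum_mono)
  also have "\<dots> = c" using \<open>(\<Sum>j\<in>J. p j) = 1\<close> by (simp add: sum_distrib_right[symmetric])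
  finally show ?thesis .
qed

lemma sum_UNIV_option:
  fixes f :: "'v::finite option \<Rightarrow> 'b::comm_monoid_add"
  shows "(\<Sum>j\<in>UNIV. f j) = f None + (\<Sum>j\<in>UNIV. f (Some j))"
proof -
  have "(\<Sum>j\<in>UNIV. f j) = (\<Sum>j\<in>insert None (range Some). f j)"
    by (simp add: UNIV_option_conv)
  also have "\<dots> = f None + (\<Sum>j\<in>UNIV. f (Some j))"
    by (subst sum.insert) (auto simp: sum.reindex)
  finally show ?thesis .
qed

lemma sum_swap_stages:
  "(\<Sum>i\<in>A. \<Sum>a\<in>B. \<Sum>k\<le>nT a. f i a k) = (\<Sum>a\<in>B. \<Sum>k\<le>nT a. \<Sum>i\<in>A. f i a k)"
  by (subst sum.swap) (simp add: sum.swap[of _ A])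

lemma valid_phi_nonneg: "valid_phi E nT dest \<rho> \<Longrightarrow> k \<le> nT a \<Longrightarrow> 0 \<le> \<rho> a k i j"
  unfolding valid_phi_def by blast

lemma valid_phi_link:
  "valid_phi E nT dest \<rho> \<Longrightarrow> k \<le> nT a \<Longrightarrow> \<rho> a k i (Some j) \<noteq> 0 \<Longrightarrow> (i, j) \<in> E"
  unfolding valid_phi_def by blast

lemma valid_phi_last_stage: "valid_phi E nT dest \<rho> \<Longrightarrow> \<rho> a (nT a) i None = 0"
  unfolding valid_phi_def by blast

lemma valid_phi_sum:
  "valid_phi E nT dest \<rho> \<Longrightarrow> k \<le> nT a \<Longrightarrow>
     (\<Sum>j\<in>UNIV. \<rho> a k i j) = (if k = nT a \<and> i = dest a then 0 else 1)"
  unfolding valid_phi_def by blast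

lemma valid_phi_terminal:
  fixes \<rho> :: "'a \<Rightarrow> nat \<Rightarrow> 'v::finite \<Rightarrow> 'v option \<Rightarrow> real"
  assumes "valid_phi E nT dest \<rho>"
  shows "\<rho> a (nT a) (dest a) j = 0"
  using sum_nonneg_eq_0_iff[of UNIV "\<rho> a (nT a) (dest a)"]
    valid_phi_sum[OF assms, of "nT a"] valid_phi_nonneg[OF assms, of "nT a"] by auto

definition states :: "('a::finite \<Rightarrow> nat) \<Rightarrow> ('a \<times> nat \<times> 'v::finite) set" where
  "states nT = (SIGMA a:UNIV. SIGMA k:{..nT a}. UNIV)"

fun transition ::
  "('a \<Rightarrow> nat \<Rightarrow> 'v \<Rightarrow> 'v option \<Rightarrow> real) \<Rightarrow> 'a \<times> nat \<times> 'v \<Rightarrow> 'a \<times> nat \<times> 'v \<Rightarrow> real" where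
  "transition \<rho> (a', k', j) (a, k, i) =
     (if a' = a \<and> k' = k then \<rho> a k j (Some i) else 0) +
     (if a' = a \<and> Suc k' = k \<and> j = i then \<rho> a k' j None else 0)"

fun injection :: "('v \<Rightarrow> 'a \<Rightarrow> real) \<Rightarrow> 'a \<times> nat \<times> 'v \<Rightarrow> real" where
  "injection r (a, k, i) = (if k = 0 then r i a else 0)"

lemma finite_states [simp]: "finite (states nT)"
  unfolding states_def by (intro finite_SigmaI) auto

lemma mem_states [simp]: "(a, k, i) \<in> states nT \<longleftrightarrow> k \<le> nT a"
  unfolding states_def by auto

lemma ball_states: "(\<forall>q\<in>states nT. P q) \<longleftrightarrow> (\<forall>a k i. k \<le> nT a \<longrightarrow> P (a, k, i))"
  unfolding states_def by auto

lemma sum_states: "(\<Sum>q\<in>states nT. f q) = (\<Sum>a\<in>UNIV. \<Sum>k\<le>nT a. \<Sum>i\<in>UNIV. f (a, k, i))"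
  unfolding states_def by (simp add: sum.Sigma)

lemma sum_states_stage:
  assumes "k \<le> nT a"
  shows "(\<Sum>q\<in>states nT. if fst q = a \<and> fst (snd q) = k then g q else 0) = (\<Sum>i\<in>UNIV. g (a, k, i))"
proof -
  have "(\<Sum>q\<in>states nT. if fst q = a \<and> fst (snd q) = k then g q else 0)
      = sum g {q \<in> states nT. fst q = a \<and> fst (snd q) = k}"
    by (rule sum.inter_filter[symmetric]) simp
  also have "{q \<in> states nT. fst q = a \<and> fst (snd q) = k} = (\<lambda>i. (a, k, i)) ` UNIV"
    using assms by (auto simp: states_def)
  also have "sum g ((\<lambda>i. (a, k, i)) ` UNIV) = (\<Sum>i\<in>UNIV. g (a, k, i))"
    by (simp add: sum.reindex inj_on_def)
  finally show ?thesis .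
qed

lemma sum_transition_row:
  assumes "valid_phi E nT dest \<rho>" and "k \<le> nT a"
  shows "(\<Sum>q\<in>states nT. transition \<rho> (a, k, j) q * h q)
    = (\<Sum>i\<in>UNIV. \<rho> a k j (Some i) * h (a, k, i)) + \<rho> a k j None * h (a, Suc k, j)"
proof -
  have "transition \<rho> (a, k, j) q * h q =
      (if fst q = a \<and> fst (snd q) = k then \<rho> a k j (Some (snd (snd q))) * h q else 0) +
      (if q = (a, Suc k, j) then \<rho> a k j None * h q else 0)" for q
    by (cases q) auto
  moreover have "(\<Sum>q\<in>states nT. if q = (a, Suc k, j) then \<rho> a k j None * h q else 0)
      = \<rho> a k j None * h (a, Suc k, j)"
    using assms by (cases "k = nT a") (auto simp: valid_phi_def)
  ultimately show ?thesis
    using sum_states_stage[where k = k and nT = nT and a = a and g = "\<lambda>q. \<rho> a k j (Some (snd (snd q))) * h q", OF assms(2)]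
    by (simp add: sum.distrib)
qed

lemma sum_transition_col:
  assumes "k \<le> nT a"
  shows "(\<Sum>p\<in>states nT. x p * transition \<rho> p (a, k, i))
    = (\<Sum>j\<in>UNIV. x (a, k, j) * \<rho> a k j (Some i))
      + (if k = 0 then 0 else x (a, k - 1, i) * \<rho> a (k - 1) i None)"
proof -
  have "x p * transition \<rho> p (a, k, i) =
      (if fst p = a \<and> fst (snd p) = k then x p * \<rho> a k (snd (snd p)) (Some i) else 0) +
      (if p = (a, k - 1, i) \<and> k \<noteq> 0 then x p * \<rho> a (k - 1) i None else 0)" for p
    by (cases p) auto
  moreover have "(\<Sum>p\<in>states nT. if p = (a, k - 1, i) \<and> k \<noteq> 0 then x p * \<rho> a (k - 1) i None else 0)
      = (if k = 0 then 0 else x (a, k - 1, i) * \<rho> a (k - 1) i None)"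
    using assms by (cases "k = 0") auto
  ultimately show ?thesis
    using sum_states_stage[where k = k and nT = nT and a = a and g = "\<lambda>p. x p * \<rho> a k (snd (snd p)) (Some i)", OF assms]
    by (simp add: sum.distrib)
qed

lemma sum_transition_row_valid:
  fixes \<rho> :: "'a::finite \<Rightarrow> nat \<Rightarrow> 'v::finite \<Rightarrow> 'v option \<Rightarrow> real"
  assumes "valid_phi E nT dest \<rho>" and "k \<le> nT a"
  shows "(\<Sum>q\<in>states nT. transition \<rho> (a, k, j) q) = (if k = nT a \<and> j = dest a then 0 else 1)"
  using sum_transition_row[OF assms, where h = "\<lambda>_. 1" and j = j]
    valid_phi_sum[OF assms] sum_UNIV_option[of "\<rho> a k j"]
  by (simp add: add.commute)

lemma is_traffic_iff_fixpoint:
  "is_traffic nT r \<rho> (\<lambda>a k i. x (a, k, i)) \<longleftrightarrow>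
     (\<forall>q\<in>states nT. x q = (\<Sum>p\<in>states nT. x p * transition \<rho> p q) + injection r q)"
  unfolding is_traffic_def ball_states by (auto simp: sum_transition_col)

lemma is_traffic_traffic: "traffic_unique nT r \<rho> \<Longrightarrow> is_traffic nT r \<rho> (traffic nT r \<rho>)"
  unfolding traffic_unique_def traffic_def using someI_ex[of "is_traffic nT r \<rho>"] by blast

lemma traffic_unique_eq:
  assumes "traffic_unique nT r \<rho>" and "is_traffic nT r \<rho> u" and "k \<le> nT a"
  shows "u a k i = traffic nT r \<rho> a k i"
  using assms is_traffic_traffic[OF assms(1)] unfolding traffic_unique_def by blast

lemma traffic_nonneg:
  fixes \<rho> :: "'a::finite \<Rightarrow> nat \<Rightarrow> 'v::finite \<Rightarrow> 'v option \<Rightarrow> real"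
  assumes valid: "valid_phi E nT dest \<rho>" and unique: "traffic_unique nT r \<rho>"
    and r_nonneg: "\<And>i a. 0 \<le> r i a" and "k \<le> nT a"
  shows "0 \<le> traffic nT r \<rho> a k i"
proof -
  have "0 \<le> (\<lambda>(a, k, i). traffic nT r \<rho> a k i) (a, k, i)"
  proof (rule substochastic_fixpoint_nonneg[where P = "transition \<rho>" and b = "injection r", OF finite_states])
    fix p q :: "'a \<times> nat \<times> 'v" assume "p \<in> states nT" "q \<in> states nT"
    then show "0 \<le> transition \<rho> p q"
      using valid_phi_nonneg[OF valid] by (cases p, cases q) auto
  next
    fix p :: "'a \<times> nat \<times> 'v" assume "p \<in> states nT"
    then show "(\<Sum>q\<in>states nT. transition \<rho> p q) \<le> 1"
      using sum_transition_row_valid[OF valid] by (cases p) auto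
  next
    fix q :: "'a \<times> nat \<times> 'v" show "0 \<le> injection r q" using r_nonneg by (cases q) auto
  next
    fix y and q :: "'a \<times> nat \<times> 'v"
    assume "\<And>q. q \<in> states nT \<Longrightarrow> y q = (\<Sum>p\<in>states nT. y p * transition \<rho> p q) + injection r q"
      and "q \<in> states nT"
    then have "is_traffic nT r \<rho> (\<lambda>a k i. y (a, k, i))"
      by (simp add: is_traffic_iff_fixpoint)
    with \<open>q \<in> states nT\<close> show "y q = (\<lambda>(a, k, i). traffic nT r \<rho> a k i) q"
      using traffic_unique_eq[OF unique] by (cases q) auto
  qed (use is_traffic_iff_fixpoint[of nT r \<rho> "\<lambda>(a, k, i). traffic nT r \<rho> a k i"]
      is_traffic_traffic[OF unique] \<open>k \<le> nT a\<close> in auto)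
  then show ?thesis by simp
qed

definition link_price ::
  "('a::finite \<Rightarrow> nat) \<Rightarrow> ('a \<Rightarrow> nat \<Rightarrow> real) \<Rightarrow> ('v \<Rightarrow> 'v \<Rightarrow> real \<Rightarrow> real) \<Rightarrow>
   ('a \<Rightarrow> nat \<Rightarrow> 'v \<Rightarrow> 'v option \<Rightarrow> real) \<Rightarrow> ('a \<Rightarrow> nat \<Rightarrow> 'v \<Rightarrow> real) \<Rightarrow> 'v \<Rightarrow> 'v \<Rightarrow> real" where
  "link_price nT L D' phi t i j = D' i j (linkflow nT L phi t i j)"

definition processor_price ::
  "('a::finite \<Rightarrow> nat) \<Rightarrow> ('v \<Rightarrow> 'a \<Rightarrow> nat \<Rightarrow> real) \<Rightarrow> ('v \<Rightarrow> real \<Rightarrow> real) \<Rightarrow>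
   ('a \<Rightarrow> nat \<Rightarrow> 'v \<Rightarrow> 'v option \<Rightarrow> real) \<Rightarrow> ('a \<Rightarrow> nat \<Rightarrow> 'v \<Rightarrow> real) \<Rightarrow> 'v \<Rightarrow> real" where
  "processor_price nT w C' phi t i = C' i (workload nT w phi t i)"

definition hop_cost ::
  "('a \<Rightarrow> nat \<Rightarrow> real) \<Rightarrow> ('v \<Rightarrow> 'a \<Rightarrow> nat \<Rightarrow> real) \<Rightarrow> ('v \<Rightarrow> 'v \<Rightarrow> real) \<Rightarrow> ('v \<Rightarrow> real) \<Rightarrow>
   ('a \<Rightarrow> nat \<Rightarrow> 'v \<Rightarrow> real) \<Rightarrow> 'a \<Rightarrow> nat \<Rightarrow> 'v \<Rightarrow> 'v option \<Rightarrow> real" where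
  "hop_cost L w cE cC \<delta> a k i j =
     (case j of
        None \<Rightarrow> w i a k * cC i + \<delta> a (Suc k) i
      | Some j' \<Rightarrow> L a k * cE i j' + \<delta> a k j')"

definition reduced_cost ::
  "('a \<Rightarrow> nat \<Rightarrow> real) \<Rightarrow> ('v \<Rightarrow> 'a \<Rightarrow> nat \<Rightarrow> real) \<Rightarrow> ('v::finite \<Rightarrow> 'v \<Rightarrow> real) \<Rightarrow> ('v \<Rightarrow> real) \<Rightarrow>
   ('a \<Rightarrow> nat \<Rightarrow> 'v \<Rightarrow> real) \<Rightarrow> ('a \<Rightarrow> nat \<Rightarrow> 'v \<Rightarrow> 'v option \<Rightarrow> real) \<Rightarrow> 'a \<Rightarrow> nat \<Rightarrow> 'v \<Rightarrow> real" where
  "reduced_cost L w cE cC \<delta> \<rho> a k i =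
     (\<Sum>j\<in>UNIV. \<rho> a k i j * (hop_cost L w cE cC \<delta> a k i j - \<delta> a k i))"

definition linear_cost ::
  "('v::finite \<times> 'v) set \<Rightarrow> ('a::finite \<Rightarrow> nat) \<Rightarrow> ('a \<Rightarrow> nat \<Rightarrow> real) \<Rightarrow> ('v \<Rightarrow> 'a \<Rightarrow> nat \<Rightarrow> real) \<Rightarrow>
   ('v \<Rightarrow> 'v \<Rightarrow> real) \<Rightarrow> ('v \<Rightarrow> real) \<Rightarrow>
   ('a \<Rightarrow> nat \<Rightarrow> 'v \<Rightarrow> 'v option \<Rightarrow> real) \<Rightarrow> ('a \<Rightarrow> nat \<Rightarrow> 'v \<Rightarrow> real) \<Rightarrow> real" where
  "linear_cost E nT L w cE cC \<rho> u =
     (\<Sum>(i, j)\<in>E. cE i j * linkflow nT L \<rho> u i j) + (\<Sum>i\<in>UNIV. cC i * workload nT w \<rho> u i)"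

text \<open>For the zero potential, the reduced cost is the plain cost of one hop.\<close>
lemma linear_cost_eq_sum_states:
  fixes \<rho> :: "'a::finite \<Rightarrow> nat \<Rightarrow> 'v::finite \<Rightarrow> 'v option \<Rightarrow> real"
  assumes "valid_phi E nT dest \<rho>"
  shows "linear_cost E nT L w cE cC \<rho> u =
    (\<Sum>(a, k, i)\<in>states nT. u a k i * reduced_cost L w cE cC (\<lambda>_ _ _. 0) \<rho> a k i)"
proof -
  have "linkflow nT L \<rho> u i j = 0" if "(i, j) \<notin> E" for i j
    using assms that unfolding valid_phi_def linkflow_def by (auto intro!: sum.neutral)
  then have "(\<Sum>(i, j)\<in>E. cE i j * linkflow nT L \<rho> u i j)
      = (\<Sum>(i, j)\<in>UNIV. cE i j * linkflow nT L \<rho> u i j)"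
    by (intro sum.mono_neutral_left) auto
  also have "\<dots> = (\<Sum>i\<in>UNIV. \<Sum>j\<in>UNIV. cE i j * linkflow nT L \<rho> u i j)"
    by (simp add: UNIV_Times_UNIV[symmetric] sum.cartesian_product del: UNIV_Times_UNIV)
  also have "\<dots> = (\<Sum>a\<in>UNIV. \<Sum>k\<le>nT a. \<Sum>i\<in>UNIV. \<Sum>j\<in>UNIV.
      u a k i * (\<rho> a k i (Some j) * (L a k * cE i j)))"
    unfolding linkflow_def by (simp add: sum_distrib_left sum_swap_stages mult_ac)
  finally have links: "(\<Sum>(i, j)\<in>E. cE i j * linkflow nT L \<rho> u i j) = \<dots>" .
  have processors: "(\<Sum>i\<in>UNIV. cC i * workload nT w \<rho> u i)
      = (\<Sum>a\<in>UNIV. \<Sum>k\<le>nT a. \<Sum>i\<in>UNIV. u a k i * (\<rho> a k i None * (w i a k * cC i)))"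
    unfolding workload_def by (simp add: sum_distrib_left sum_swap_stages mult_ac)
  show ?thesis
    unfolding linear_cost_def links processors sum_states reduced_cost_def hop_cost_def sum_UNIV_option
    by (simp add: sum.distrib sum_distrib_left distrib_left)
qed

text \<open>Telescoping the potential \<open>\<delta>\<close> along the traffic equations.\<close>
lemma linear_cost_eq_reduced_cost:
  fixes \<rho> :: "'a::finite \<Rightarrow> nat \<Rightarrow> 'v::finite \<Rightarrow> 'v option \<Rightarrow> real"
  assumes valid: "valid_phi E nT dest \<rho>" and traffic: "is_traffic nT r \<rho> u"
    and terminal: "\<And>a. \<delta> a (nT a) (dest a) = 0"
  shows "linear_cost E nT L w cE cC \<rho> u =
    (\<Sum>(a, k, i)\<in>states nT. u a k i * reduced_cost L w cE cC \<delta> \<rho> a k i)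
    + (\<Sum>a\<in>UNIV. \<Sum>i\<in>UNIV. r i a * \<delta> a 0 i)"
proof -
  define x where "x = (\<lambda>(a, k, i). u a k i)"
  define d where "d = (\<lambda>(a, k, i). \<delta> a k i)"
  have fixpoint: "x q = (\<Sum>p\<in>states nT. x p * transition \<rho> p q) + injection r q"
    if "q \<in> states nT" for q
    using is_traffic_iff_fixpoint[of nT r \<rho> x] traffic that by (simp add: x_def)
  have row_sum: "d p * (\<Sum>q\<in>states nT. transition \<rho> p q) = d p" if "p \<in> states nT" for p
    using that sum_transition_row_valid[OF valid] terminal by (cases p) (auto simp: d_def)
  have shift: "(\<Sum>q\<in>states nT. transition \<rho> (a, k, i) q * (d q - d (a, k, i)))
      = reduced_cost L w cE cC \<delta> \<rho> a k i - reduced_cost L w cE cC (\<lambda>_ _ _. 0) \<rho> a k i"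
    if "k \<le> nT a" for a k i
    unfolding sum_transition_row[OF valid that]
      reduced_cost_def hop_cost_def sum_UNIV_option
    by (simp add: d_def algebra_simps sum_subtractf sum.distrib)
  have injected: "(\<Sum>q\<in>states nT. injection r q * d q) = (\<Sum>a\<in>UNIV. \<Sum>i\<in>UNIV. r i a * \<delta> a 0 i)"
    by (simp add: sum_states sum.atMost_shift d_def)
  have "(\<Sum>(a, k, i)\<in>states nT. u a k i *
        (reduced_cost L w cE cC \<delta> \<rho> a k i - reduced_cost L w cE cC (\<lambda>_ _ _. 0) \<rho> a k i))
      = (\<Sum>p\<in>states nT. x p * (\<Sum>q\<in>states nT. transition \<rho> p q * (d q - d p)))"
    by (intro sum.cong) (auto simp: x_def shift)
  also have "\<dots> = - (\<Sum>a\<in>UNIV. \<Sum>i\<in>UNIV. r i a * \<delta> a 0 i)"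
    using fixpoint_telescoping[OF finite_states fixpoint row_sum] injected by simp
  finally show ?thesis
    unfolding linear_cost_eq_sum_states[OF valid]
    by (simp add: right_diff_distrib sum_subtractf split_def)
qed

lemma is_marginal_eq_sum_hop_cost:
  fixes phi :: "'a::finite \<Rightarrow> nat \<Rightarrow> 'v::finite \<Rightarrow> 'v option \<Rightarrow> real"
  assumes valid: "valid_phi E nT dest phi" and marginal: "is_marginal nT dest L w D' C' phi t \<delta>"
    and "k \<le> nT a" and not_terminal: "\<not> (k = nT a \<and> i = dest a)"
  shows "\<delta> a k i = (\<Sum>j\<in>UNIV. phi a k i j *
    hop_cost L w (link_price nT L D' phi t) (processor_price nT w C' phi t) \<delta> a k i j)"
proof (cases "k < nT a")
  case True
  then show ?thesis
    using marginal unfolding is_marginal_def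
    by (simp add: sum_UNIV_option hop_cost_def link_price_def processor_price_def)
next
  case False
  with \<open>k \<le> nT a\<close> not_terminal have "k = nT a" "i \<noteq> dest a" by auto
  then show ?thesis
    using marginal valid_phi_last_stage[OF valid]
    unfolding is_marginal_def by (simp add: sum_UNIV_option hop_cost_def link_price_def)
qed

lemma reduced_cost_marginal:
  fixes phi :: "'a::finite \<Rightarrow> nat \<Rightarrow> 'v::finite \<Rightarrow> 'v option \<Rightarrow> real"
  assumes valid: "valid_phi E nT dest phi" and marginal: "is_marginal nT dest L w D' C' phi t \<delta>"
    and "k \<le> nT a"
  shows "reduced_cost L w (link_price nT L D' phi t) (processor_price nT w C' phi t) \<delta> phi a k i = 0"
proof (cases "k = nT a \<and> i = dest a")
  case True
  then show ?thesis
    using valid_phi_terminal[OF valid] by (auto simp: reduced_cost_def)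
next
  case False
  let ?cE = "link_price nT L D' phi t" and ?cC = "processor_price nT w C' phi t"
  have "reduced_cost L w ?cE ?cC \<delta> phi a k i
      = (\<Sum>j\<in>UNIV. phi a k i j * hop_cost L w ?cE ?cC \<delta> a k i j) - \<delta> a k i * (\<Sum>j\<in>UNIV. phi a k i j)"
    by (simp add: reduced_cost_def right_diff_distrib sum_subtractf sum_distrib_left mult.commute)
  then show ?thesis
    using is_marginal_eq_sum_hop_cost[OF valid marginal \<open>k \<le> nT a\<close> False]
      valid_phi_sum[OF valid \<open>k \<le> nT a\<close>, of i] False
    by simp
qed

lemma dT_dphi_eq_hop_cost:
  fixes \<rho> :: "'a::finite \<Rightarrow> nat \<Rightarrow> 'v::finite \<Rightarrow> 'v option \<Rightarrow> real"
  assumes valid: "valid_phi E nT dest \<rho>" and "k \<le> nT a" and "\<rho> a k i j \<noteq> 0"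
  shows "dT_dphi E nT L w D' C' phi t \<delta> a k i j =
    ereal (t a k i * hop_cost L w (link_price nT L D' phi t) (processor_price nT w C' phi t) \<delta> a k i j)"
proof (cases j)
  case None
  with assms valid_phi_last_stage[OF valid] have "k < nT a"
    using le_neq_implies_less by blast
  then show ?thesis by (simp add: None dT_dphi_def hop_cost_def processor_price_def)
next
  case (Some j')
  then have "(i, j') \<in> E" using valid_phi_link[OF valid] assms by blast
  then show ?thesis by (simp add: Some dT_dphi_def hop_cost_def link_price_def)
qed

lemma marginal_le_hop_cost:
  fixes phi :: "'a::finite \<Rightarrow> nat \<Rightarrow> 'v::finite \<Rightarrow> 'v option \<Rightarrow> real"
  assumes valid: "valid_phi E nT dest phi" and marginal: "is_marginal nT dest L w D' C' phi t \<delta>"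
    and "k \<le> nT a" and not_terminal: "\<not> (k = nT a \<and> i = dest a)" and "0 < t a k i"
    and optimal: "\<And>j. 0 < phi a k i j \<Longrightarrow>
      dT_dphi E nT L w D' C' phi t \<delta> a k i j = Min (range (dT_dphi E nT L w D' C' phi t \<delta> a k i))"
    and admissible: "dT_dphi E nT L w D' C' phi t \<delta> a k i j' =
      ereal (t a k i * hop_cost L w (link_price nT L D' phi t) (processor_price nT w C' phi t) \<delta> a k i j')"
  shows "\<delta> a k i \<le> hop_cost L w (link_price nT L D' phi t) (processor_price nT w C' phi t) \<delta> a k i j'"
proof -
  let ?hop = "hop_cost L w (link_price nT L D' phi t) (processor_price nT w C' phi t) \<delta> a k i"
  have "?hop j \<le> ?hop j'" if "0 < phi a k i j" for j
  proof -
    have "ereal (t a k i * ?hop j) = dT_dphi E nT L w D' C' phi t \<delta> a k i j"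
      using dT_dphi_eq_hop_cost[OF valid \<open>k \<le> nT a\<close>] that by simp
    also have "\<dots> = Min (range (dT_dphi E nT L w D' C' phi t \<delta> a k i))" using optimal[OF that] .
    also have "\<dots> \<le> dT_dphi E nT L w D' C' phi t \<delta> a k i j'" by (rule Min_le) simp_all
    finally show ?thesis using admissible \<open>0 < t a k i\<close> by simp
  qed
  then show ?thesis
    unfolding is_marginal_eq_sum_hop_cost[OF valid marginal \<open>k \<le> nT a\<close> not_terminal]
    using valid_phi_nonneg[OF valid \<open>k \<le> nT a\<close>] valid_phi_sum[OF valid \<open>k \<le> nT a\<close>] not_terminal
    by (intro convex_combination_le) (auto simp: link_price_def processor_price_def)
qed

lemma reduced_cost_nonneg:
  assumes valid: "valid_phi E nT dest \<rho>" and "k \<le> nT a"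
    and hop_cost_ge: "\<And>j. \<rho> a k i j \<noteq> 0 \<Longrightarrow> \<delta> a k i \<le> hop_cost L w cE cC \<delta> a k i j"
  shows "0 \<le> reduced_cost L w cE cC \<delta> \<rho> a k i"
  unfolding reduced_cost_def
proof (rule sum_nonneg)
  fix j
  show "0 \<le> \<rho> a k i j * (hop_cost L w cE cC \<delta> a k i j - \<delta> a k i)"
    using valid_phi_nonneg[OF valid \<open>k \<le> nT a\<close>, of i j] hop_cost_ge[of j]
    by (cases "\<rho> a k i j = 0") simp_all
qed

lemma reduced_cost_nonneg_if_optimal:
  fixes phi psi :: "'a::finite \<Rightarrow> nat \<Rightarrow> 'v::finite \<Rightarrow> 'v option \<Rightarrow> real"
  assumes phi_valid: "valid_phi E nT dest phi" and marginal: "is_marginal nT dest L w D' C' phi t \<delta>"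
    and psi_valid: "valid_phi E nT dest psi" and "k \<le> nT a" and "0 < t a k i"
    and optimal: "\<And>j. 0 < phi a k i j \<Longrightarrow>
      dT_dphi E nT L w D' C' phi t \<delta> a k i j = Min (range (dT_dphi E nT L w D' C' phi t \<delta> a k i))"
  shows "0 \<le> reduced_cost L w (link_price nT L D' phi t) (processor_price nT w C' phi t) \<delta> psi a k i"
proof (rule reduced_cost_nonneg[OF psi_valid \<open>k \<le> nT a\<close>])
  fix j assume "psi a k i j \<noteq> 0"
  moreover from this have "\<not> (k = nT a \<and> i = dest a)"
    using valid_phi_terminal[OF psi_valid] by auto
  ultimately show "\<delta> a k i \<le> hop_cost L w (link_price nT L D' phi t) (processor_price nT w C' phi t) \<delta> a k i j"
    using marginal_le_hop_cost[OF phi_valid marginal \<open>k \<le> nT a\<close> _ \<open>0 < t a k i\<close> optimal]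
      dT_dphi_eq_hop_cost[OF psi_valid \<open>k \<le> nT a\<close>]
    by blast
qed

lemma total_cost_ge_linearization:
  fixes phi psi :: "'a::finite \<Rightarrow> nat \<Rightarrow> 'v::finite \<Rightarrow> 'v option \<Rightarrow> real"
  assumes D_cost: "\<forall>(i, j)\<in>E. cost_fun (Ddom i j) (D i j) (D' i j)"
    and C_cost: "\<forall>i. cost_fun (Cdom i) (C i) (C' i)"
    and phi_feasible: "feasible E nT dest L w Ddom Cdom r phi"
    and psi_feasible: "feasible E nT dest L w Ddom Cdom r psi"
  shows "total_cost E nT L w D C r phi
      + linear_cost E nT L w (link_price nT L D' phi (traffic nT r phi))
          (processor_price nT w C' phi (traffic nT r phi)) psi (traffic nT r psi)
    \<le> total_cost E nT L w D C r psi
      + linear_cost E nT L w (link_price nT L D' phi (traffic nT r phi))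
          (processor_price nT w C' phi (traffic nT r phi)) phi (traffic nT r phi)"
proof -
  define F F' G G' where "F = linkflow nT L phi (traffic nT r phi)"
    and "F' = linkflow nT L psi (traffic nT r psi)"
    and "G = workload nT w phi (traffic nT r phi)"
    and "G' = workload nT w psi (traffic nT r psi)"
  have "D i j (F i j) + D' i j (F i j) * (F' i j - F i j) \<le> D i j (F' i j)" if "(i, j) \<in> E" for i j
    using phi_feasible psi_feasible D_cost that unfolding feasible_def
    by (intro cost_fun_above_tangent[of "Ddom i j"]) (auto simp: F_def F'_def)
  then have links: "(\<Sum>(i, j)\<in>E. D i j (F i j)) + (\<Sum>(i, j)\<in>E. D' i j (F i j) * F' i j)
      \<le> (\<Sum>(i, j)\<in>E. D i j (F' i j)) + (\<Sum>(i, j)\<in>E. D' i j (F i j) * F i j)"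
    using sum_mono[of E "\<lambda>(i, j). D i j (F i j) + D' i j (F i j) * (F' i j - F i j)" "\<lambda>(i, j). D i j (F' i j)"]
    by (simp add: split_def sum.distrib sum_subtractf right_diff_distrib)
  have "C i (G i) + C' i (G i) * (G' i - G i) \<le> C i (G' i)" for i
    using phi_feasible psi_feasible C_cost unfolding feasible_def
    by (intro cost_fun_above_tangent[of "Cdom i"]) (auto simp: G_def G'_def)
  then have processors: "(\<Sum>i\<in>UNIV. C i (G i)) + (\<Sum>i\<in>UNIV. C' i (G i) * G' i)
      \<le> (\<Sum>i\<in>UNIV. C i (G' i)) + (\<Sum>i\<in>UNIV. C' i (G i) * G i)"
    using sum_mono[of UNIV "\<lambda>i. C i (G i) + C' i (G i) * (G' i - G i)" "\<lambda>i. C i (G' i)"]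
    by (simp add: sum.distrib sum_subtractf right_diff_distrib)
  show ?thesis
    using links processors
    unfolding total_cost_def linear_cost_def link_price_def processor_price_def F_def F'_def G_def G'_def
    by linarith
qed

theorem proposition2:
  fixes E :: "('v::finite \<times> 'v) set"
    and nT :: "'a::finite \<Rightarrow> nat"
    and dest :: "'a \<Rightarrow> 'v"
    and L :: "'a \<Rightarrow> nat \<Rightarrow> real"
    and w :: "'v \<Rightarrow> 'a \<Rightarrow> nat \<Rightarrow> real"
    and r :: "'v \<Rightarrow> 'a \<Rightarrow> real"
    and D D' :: "'v \<Rightarrow> 'v \<Rightarrow> real \<Rightarrow> real"
    and Ddom :: "'v \<Rightarrow> 'v \<Rightarrow> real set"
    and C C' :: "'v \<Rightarrow> real \<Rightarrow> real"
    and Cdom :: "'v \<Rightarrow> real set"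
    and phi :: "'a \<Rightarrow> nat \<Rightarrow> 'v \<Rightarrow> 'v option \<Rightarrow> real"
    and delta :: "'a \<Rightarrow> nat \<Rightarrow> 'v \<Rightarrow> real"
  assumes strongly_connected: "\<forall>i j. (i, j) \<in> E\<^sup>*"
    and bidirectional: "\<forall>i j. (i, j) \<in> E \<longrightarrow> (j, i) \<in> E"
    and L_pos: "\<forall>a k. k \<le> nT a \<longrightarrow> L a k > 0"
    and w_pos: "\<forall>i a k. k \<le> nT a \<longrightarrow> w i a k > 0"
    and r_nonneg: "\<forall>i a. r i a \<ge> 0"
    and D_cost: "\<forall>(i, j)\<in>E. cost_fun (Ddom i j) (D i j) (D' i j)"
    and C_cost: "\<forall>i. cost_fun (Cdom i) (C i) (C' i)"
    and phi_feasible: "feasible E nT dest L w Ddom Cdom r phi"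
    and t_pos: "\<forall>a k i. k \<le> nT a \<longrightarrow> traffic nT r phi a k i > 0"
    and delta_marginal:
      "is_marginal nT dest L w D' C' phi (traffic nT r phi) delta"
    and optimality_cond:
      "\<forall>a k i j. k \<le> nT a \<longrightarrow>
         (let dT = dT_dphi E nT L w D' C' phi (traffic nT r phi) delta a k i;
              m = Min (range dT)
          in (phi a k i j > 0 \<longrightarrow> dT j = m) \<and> (phi a k i j = 0 \<longrightarrow> dT j \<ge> m))"
  shows "\<forall>psi. feasible E nT dest L w Ddom Cdom r psi \<longrightarrow>
           total_cost E nT L w D C r phi \<le> total_cost E nT L w D C r psi"
proof (intro allI impI)
  fix psi assume psi_feasible: "feasible E nT dest L w Ddom Cdom r psi"
  define t where "t = traffic nT r phi"
  define cE where "cE = link_price nT L D' phi t"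
  define cC where "cC = processor_price nT w C' phi t"
  let ?injected = "\<Sum>a\<in>UNIV. \<Sum>i\<in>UNIV. r i a * delta a 0 i"
  have phi_valid: "valid_phi E nT dest phi" and phi_unique: "traffic_unique nT r phi"
    and psi_valid: "valid_phi E nT dest psi" and psi_unique: "traffic_unique nT r psi"
    using phi_feasible psi_feasible unfolding feasible_def by auto
  have terminal: "delta a (nT a) (dest a) = 0" for a
    using delta_marginal unfolding is_marginal_def by simp
  have phi_reduced: "reduced_cost L w cE cC delta phi a k i = 0" if "k \<le> nT a" for a k i
    using reduced_cost_marginal[OF phi_valid delta_marginal that] by (simp add: t_def cE_def cC_def)
  have psi_reduced: "0 \<le> reduced_cost L w cE cC delta psi a k i" if "k \<le> nT a" for a k i
    using reduced_cost_nonneg_if_optimal[OF phi_valid delta_marginal psi_valid that] t_pos optimality_cond that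
    by (simp add: t_def cE_def cC_def Let_def)
  have "linear_cost E nT L w cE cC phi t = ?injected"
    unfolding t_def linear_cost_eq_reduced_cost[OF phi_valid is_traffic_traffic[OF phi_unique],
      where \<delta> = delta, OF terminal]
    by (simp add: sum.neutral ball_states phi_reduced[unfolded t_def])
  moreover have "?injected \<le> linear_cost E nT L w cE cC psi (traffic nT r psi)"
    unfolding linear_cost_eq_reduced_cost[OF psi_valid is_traffic_traffic[OF psi_unique],
      where \<delta> = delta, OF terminal]
    using traffic_nonneg[OF psi_valid psi_unique] r_nonneg psi_reduced
    by (simp, intro sum_nonneg) (clarsimp intro!: mult_nonneg_nonneg)
  ultimately show "total_cost E nT L w D C r phi \<le> total_cost E nT L w D C r psi"
    using total_cost_ge_linearization[OF D_cost C_cost phi_feasible psi_feasible]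
    unfolding t_def cE_def cC_def by linarith
qed

end
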